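(* Let $(X,d_X,\mu,T)$ and $(Y,d_Y,\nu,S)$ be compact metric measure-preserving systems, let $(a_r)_{r\ge1}$ be dense in $\operatorname{supp}\mu$ and $(b_r)_{r\ge1}$ dense in $\operatorname{supp}\nu$, and let $\lambda,\lambda'\in\mathcal J(T,S)$. If $\widetilde\Phi_{n,m,R}(\lambda)=\widetilde\Phi_{n,m,R}(\lambda')$ for all $n,m,R\ge1$, then $\lambda=\lambda'$.
   Context: A compact metric measure-preserving system $(X,d_X,\mu,T)$: $(X,d_X)$ compact metric, $\mu$ Borel probability, $T$ Borel with $T_\#\mu=\mu$. $\mathcal J(T,S)$: Borel probability measures on $X\times Y$ with marginals $\mu,\nu$ invariant under $T\times S$. For $z_i=(x_i,y_i)$, $\mathcal D^X_{n,m}=(d_X(T^ax_i,T^bx_j))_{1\le i,j\le n,0\le a,b<m}$. The anchored array is $\widetilde{\mathcal D}^X_{n,m,R}(z_1,\dots,z_n)=\bigl(\mathcal D^X_{n,m},(d_X(T^ax_i,a_r))_{1\le i\le n,0\le a<m,1\le r\le R}\bigr)$, and $\widetilde{\mathcal D}^Y_{n,m,R}$ is defined analogously using $d_Y$, $S$, and the anchors $b_r$. The anchored projection is $\widetilde\Phi_{n,m,R}(\lambda)=\mathrm{Law}_{\lambda^{\otimes n}}(\widetilde{\mathcal D}^X_{n,m,R},\widetilde{\mathcal D}^Y_{n,m,R})$. *)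

theory Defs
  imports "HOL-Probability.Probability"
begin

definition msupp :: "'a::metric_space measure \<Rightarrow> 'a set" where
  "msupp \<mu> = {x. \<forall>e>0. emeasure \<mu> (ball x e) > 0}"

definition cmmps :: "'a::metric_space measure \<Rightarrow> ('a \<Rightarrow> 'a) \<Rightarrow> bool" where
  "cmmps \<mu> T \<longleftrightarrow> compact (UNIV :: 'a set) \<and> prob_space \<mu> \<and> sets \<mu> = sets borel \<and>
     T \<in> borel \<rightarrow>\<^sub>M borel \<and> distr \<mu> borel T = \<mu>"

definition joinings ::
  "'a::metric_space measure \<Rightarrow> ('a \<Rightarrow> 'a) \<Rightarrow> 'b::metric_space measure \<Rightarrow> ('b \<Rightarrow> 'b)
     \<Rightarrow> ('a \<times> 'b) measure set" where
  "joinings \<mu> T \<nu> S = {L. prob_space L \<and> sets L = sets borel \<and>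
     distr L borel fst = \<mu> \<and> distr L borel snd = \<nu> \<and>
     distr L borel (map_prod T S) = L}"

text \<open>Indices of the entries of the anchored arrays (X-part and Y-part together):
  DX i j a b ~ d_X(T^a x_i, T^b x_j),  AX i a r ~ d_X(T^a x_i, a_r), and similarly for Y.\<close>
datatype arr_idx = DX nat nat nat nat | AX nat nat nat | DY nat nat nat nat | AY nat nat nat

definition arr_idxs :: "nat \<Rightarrow> nat \<Rightarrow> nat \<Rightarrow> arr_idx set" where
  "arr_idxs n m R =
     {DX i j p q | i j p q. i \<in> {1..n} \<and> j \<in> {1..n} \<and> p < m \<and> q < m}
   \<union> {AX i p r | i p r. i \<in> {1..n} \<and> p < m \<and> r \<in> {1..R}}
   \<union> {DY i j p q | i j p q. i \<in> {1..n} \<and> j \<in> {1..n} \<and> p < m \<and> q < m}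
   \<union> {AY i p r | i p r. i \<in> {1..n} \<and> p < m \<and> r \<in> {1..R}}"

definition anch_arrays ::
  "('a::metric_space \<Rightarrow> 'a) \<Rightarrow> ('b::metric_space \<Rightarrow> 'b) \<Rightarrow> (nat \<Rightarrow> 'a) \<Rightarrow> (nat \<Rightarrow> 'b)
     \<Rightarrow> nat \<Rightarrow> nat \<Rightarrow> nat \<Rightarrow> (nat \<Rightarrow> 'a \<times> 'b) \<Rightarrow> arr_idx \<Rightarrow> real" where
  "anch_arrays T S a b n m R z = (\<lambda>k\<in>arr_idxs n m R. case k of
       DX i j p q \<Rightarrow> dist ((T ^^ p) (fst (z i))) ((T ^^ q) (fst (z j)))
     | AX i p r \<Rightarrow> dist ((T ^^ p) (fst (z i))) (a r)
     | DY i j p q \<Rightarrow> dist ((S ^^ p) (snd (z i))) ((S ^^ q) (snd (z j)))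
     | AY i p r \<Rightarrow> dist ((S ^^ p) (snd (z i))) (b r))"

definition anch_proj ::
  "('a::metric_space \<Rightarrow> 'a) \<Rightarrow> ('b::metric_space \<Rightarrow> 'b) \<Rightarrow> (nat \<Rightarrow> 'a) \<Rightarrow> (nat \<Rightarrow> 'b)
     \<Rightarrow> nat \<Rightarrow> nat \<Rightarrow> nat \<Rightarrow> ('a \<times> 'b) measure \<Rightarrow> (arr_idx \<Rightarrow> real) measure" where
  "anch_proj T S a b n m R L =
     distr (PiM {1..n} (\<lambda>_. L)) (PiM (arr_idxs n m R) (\<lambda>_. borel))
       (anch_arrays T S a b n m R)"

end

theory Submission
  imports Defs
begin

text \<open>Only the case \<open>n = m = 1\<close> of the hypothesis is needed. For a single point \<open>p = (x, y)\<close>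
  the anchored array records the distances \<open>d(x, a\<^sub>r)\<close> and \<open>d(y, b\<^sub>r)\<close>; as the anchors are
  dense in the supports, these countably many continuous coordinates separate the points of
  \<open>supp \<mu> \<times> supp \<nu>\<close>, which carries every joining. On a compact metric space such a family
  determines a finite Borel measure through the laws of its finite subfamilies: a closed set \<open>C\<close>
  with a dense sequence \<open>q\<close> agrees almost everywhere with the decreasing intersection over \<open>R\<close>
  of the sets of points whose first \<open>R\<close> coordinates are approximated by those of \<open>q\<close>, and each
  of these sets is a preimage under the first \<open>R\<close> coordinates.\<close>

lemma compact_dense_sequence:
  fixes C :: "'a::metric_space set"
  assumes "compact C" "C \<noteq> {}"
  obtains q :: "nat \<Rightarrow> 'a" where "range q \<subseteq> C" "C \<subseteq> closure (range q)"
proof -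
  have "\<exists>F. finite F \<and> F \<subseteq> C \<and> C \<subseteq> (\<Union>x\<in>F. ball x (1 / Suc k))" for k
    using seq_compact_imp_totally_bounded[OF compact_imp_seq_compact[OF assms(1)]] by simp
  then obtain F where F: "\<And>k. finite (F k)" "\<And>k. F k \<subseteq> C"
      "\<And>k. C \<subseteq> (\<Union>x\<in>F k. ball x (1 / Suc k))"
    by metis
  let ?Q = "\<Union>k. F k"
  have dense: "C \<subseteq> closure ?Q"
    unfolding subset_iff closure_approachable
  proof (intro ballI allI impI)
    fix x e assume "x \<in> C" "(e::real) > 0"
    obtain k where k: "1 / Suc k < e" using \<open>e > 0\<close> by (metis nat_approx_posE)
    obtain y where "y \<in> F k" "dist y x < 1 / Suc k"
      using F(3)[of k] \<open>x \<in> C\<close> by auto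
    with k show "\<exists>y\<in>?Q. dist y x < e" by (intro bexI[of _ y]) auto
  qed
  have "?Q \<noteq> {}" using dense assms(2) by auto
  then have Q: "range (from_nat_into ?Q) = ?Q"
    using F(1) by (intro range_from_nat_into) (auto simp: countable_finite)
  show ?thesis
    by (rule that[of "from_nat_into ?Q"]) (use Q F(2) dense in auto)
qed

lemma AE_in_msupp:
  fixes \<mu> :: "'a::metric_space measure"
  assumes "compact (UNIV :: 'a set)" "sets \<mu> = sets borel"
  shows "AE x in \<mu>. x \<in> msupp \<mu>"
proof -
  obtain q :: "nat \<Rightarrow> 'a" where q: "UNIV \<subseteq> closure (range q)"
    using compact_dense_sequence[OF assms(1) UNIV_not_empty] by metis
  define N where "N = (\<Union>(n, k)\<in>{(n, k). emeasure \<mu> (ball (q n) (1 / Suc k)) = 0}.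
                         ball (q n) (1 / Suc k))"
  have "countable {(n, k). emeasure \<mu> (ball (q n) (1 / Suc k)) = 0}"
    by (rule countable_subset[OF subset_UNIV]) simp
  then have "N \<in> null_sets \<mu>"
    unfolding N_def by (rule null_sets_UN') (auto intro!: null_setsI simp: assms(2))
  moreover have "x \<in> N" if "x \<notin> msupp \<mu>" for x
  proof -
    obtain e where e: "e > 0" "emeasure \<mu> (ball x e) = 0"
      using \<open>x \<notin> msupp \<mu>\<close> by (auto simp: msupp_def)
    obtain k where k: "1 / Suc k < e / 2" using \<open>e > 0\<close> by (metis half_gt_zero nat_approx_posE)
    obtain n where n: "dist x (q n) < 1 / Suc k"
      using closure_approachableD[of x "range q" "1 / Suc k"] q by auto
    have "ball (q n) (1 / Suc k) \<subseteq> ball x e"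
    proof
      fix y assume "y \<in> ball (q n) (1 / Suc k)"
      moreover have "dist x y \<le> dist x (q n) + dist (q n) y" by (rule dist_triangle)
      ultimately show "y \<in> ball x e" using n k by simp
    qed
    then have "emeasure \<mu> (ball (q n) (1 / Suc k)) = 0"
      using e emeasure_mono[of "ball (q n) (1 / Suc k)" "ball x e" \<mu>] assms(2) by simp
    with n show "x \<in> N" unfolding N_def by (intro UN_I[of "(n, k)"]) (auto simp: dist_commute)
  qed
  ultimately show ?thesis
    by (intro AE_I'[of N]) auto
qed

lemma closure_dist_eq_imp_eq:
  fixes x y :: "'a::metric_space"
  assumes "x \<in> closure A" "\<And>z. z \<in> A \<Longrightarrow> dist x z = dist y z"
  shows "x = y"
proof -
  have "dist x y < e" if "e > 0" for e
  proof -
    obtain z where "z \<in> A" "dist x z < e / 2"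
      using closure_approachableD[OF assms(1)] \<open>e > 0\<close> half_gt_zero by blast
    moreover have "dist x y \<le> dist x z + dist y z" by (metis dist_commute dist_triangle)
    ultimately show ?thesis using assms(2) by fastforce
  qed
  then show ?thesis by (metis dist_eq_0_iff dist_nz order.irrefl)
qed

definition coord_dist :: "('i \<Rightarrow> 'a \<Rightarrow> real) \<Rightarrow> 'i set \<Rightarrow> 'a \<Rightarrow> 'a \<Rightarrow> real" where
  "coord_dist g J x y = (\<Sum>i\<in>J. \<bar>g i x - g i y\<bar>)"

text \<open>The closure of \<open>range q\<close> for the pseudometric \<open>coord_dist g J\<close>, written with a countable
  quantifier so that it is a Borel preimage under the coordinates in \<open>J\<close>.\<close>
definition coord_closure :: "('i \<Rightarrow> 'a \<Rightarrow> real) \<Rightarrow> 'i set \<Rightarrow> (nat \<Rightarrow> 'a) \<Rightarrow> 'a set" where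
  "coord_closure g J q = {x. \<forall>j::nat. \<exists>n. coord_dist g J x (q n) < 1 / Suc j}"

definition coord_law :: "'a measure \<Rightarrow> ('i \<Rightarrow> 'a \<Rightarrow> real) \<Rightarrow> 'i set \<Rightarrow> ('i \<Rightarrow> real) measure" where
  "coord_law M g J = distr M (PiM J (\<lambda>_. borel)) (\<lambda>x. \<lambda>i\<in>J. g i x)"

lemma coord_dist_self [simp]: "coord_dist g J x x = 0"
  by (simp add: coord_dist_def)

lemma abs_diff_le_coord_dist: "finite J \<Longrightarrow> i \<in> J \<Longrightarrow> \<bar>g i x - g i y\<bar> \<le> coord_dist g J x y"
  unfolding coord_dist_def by (rule member_le_sum) auto

lemma coord_dist_mono: "finite J' \<Longrightarrow> J \<subseteq> J' \<Longrightarrow> coord_dist g J x y \<le> coord_dist g J' x y"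
  unfolding coord_dist_def by (rule sum_mono2) auto

lemma coord_closure_antimono:
  assumes "finite J'" "J \<subseteq> J'"
  shows "coord_closure g J' q \<subseteq> coord_closure g J q"
  unfolding coord_closure_def using coord_dist_mono[OF assms] by (fastforce intro: le_less_trans)

lemma closure_subset_coord_closure:
  fixes g :: "'i \<Rightarrow> 'a::metric_space \<Rightarrow> real"
  assumes "\<And>i. continuous_on UNIV (g i)"
  shows "closure (range q) \<subseteq> coord_closure g J q"
  unfolding coord_closure_def
proof (intro subsetI CollectI allI)
  fix x j assume x: "x \<in> closure (range q)"
  let ?U = "{y. coord_dist g J x y < 1 / Suc j}"
  have "continuous_on UNIV (coord_dist g J x)"
    unfolding coord_dist_def using assms by (intro continuous_intros) auto
  then have "open ?U" by (intro open_Collect_less) (auto intro: continuous_intros)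
  moreover have "x \<in> ?U" by simp
  ultimately have "?U \<inter> range q \<noteq> {}"
    using x open_Int_closure_eq_empty[of ?U "range q"] by blast
  then show "\<exists>n. coord_dist g J x (q n) < 1 / Suc j" by blast
qed

lemma Inter_coord_closure_imp_mem:
  fixes g :: "'i \<Rightarrow> 'a::metric_space \<Rightarrow> real"
  assumes "compact C" "range q \<subseteq> C" "incseq I" "\<And>R. finite (I R)"
    and cont: "\<And>i. continuous_on UNIV (g i)"
    and x: "x \<in> (\<Inter>R. coord_closure g (I R) q)"
    and sep: "\<And>y. (\<And>i. i \<in> (\<Union>R. I R) \<Longrightarrow> g i x = g i y) \<Longrightarrow> x = y"
  shows "x \<in> C"
proof -
  have "\<forall>R. \<exists>m. coord_dist g (I R) x (q m) < 1 / Suc R"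
    using x by (auto simp: coord_closure_def)
  then obtain n where n: "\<And>R. coord_dist g (I R) x (q (n R)) < 1 / Suc R"
    by metis
  obtain l \<sigma> where l: "l \<in> C" "strict_mono \<sigma>" "(\<lambda>k. q (n (\<sigma> k))) \<longlonglongrightarrow> l"
    using compact_imp_seq_compact[OF assms(1)] assms(2)
    by (elim seq_compactE[of C "\<lambda>R. q (n R)"]) (auto simp: comp_def)
  have "g i x = g i l" if "i \<in> I R0" for i R0
  proof -
    have "eventually (\<lambda>k. norm (g i (q (n (\<sigma> k))) - g i x) \<le> 1 / Suc k) sequentially"
      using eventually_ge_at_top[of R0]
    proof eventually_elim
      case (elim k)
      have "i \<in> I (\<sigma> k)"
        using that monoD[OF assms(3), of R0 "\<sigma> k"] elim seq_suble[OF l(2), of k] by auto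
      then have "\<bar>g i x - g i (q (n (\<sigma> k)))\<bar> \<le> coord_dist g (I (\<sigma> k)) x (q (n (\<sigma> k)))"
        by (rule abs_diff_le_coord_dist[OF assms(4)])
      also have "\<dots> < 1 / Suc (\<sigma> k)" by (rule n)
      also have "\<dots> \<le> 1 / Suc k"
        using seq_suble[OF l(2)] by (simp add: frac_le)
      finally show ?case by (simp add: abs_minus_commute)
    qed
    then have "(\<lambda>k. g i (q (n (\<sigma> k))) - g i x) \<longlonglongrightarrow> 0"
      by (rule Lim_null_comparison) (rule LIMSEQ_Suc[OF lim_inverse_n'])
    then have "(\<lambda>k. g i (q (n (\<sigma> k)))) \<longlonglongrightarrow> g i x"
      by (simp add: LIM_zero_iff)
    moreover have "(\<lambda>k. g i (q (n (\<sigma> k)))) \<longlonglongrightarrow> g i l"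
      using continuous_on_tendsto_compose[OF cont l(3)] by simp
    ultimately show ?thesis by (rule LIMSEQ_unique)
  qed
  then have "x = l" using sep by blast
  with l(1) show ?thesis by simp
qed

lemma measurable_restrict_continuous_on:
  "(\<And>i. continuous_on UNIV (g i)) \<Longrightarrow> (\<lambda>x. \<lambda>i\<in>J. g i x) \<in> borel \<rightarrow>\<^sub>M PiM J (\<lambda>_. borel)"
  by (intro measurable_restrict borel_measurable_continuous_onI)

lemma emeasure_coord_closure_eq:
  fixes g :: "'i \<Rightarrow> 'a::metric_space \<Rightarrow> real"
  assumes "sets L = sets borel" "sets L' = sets borel"
    and cont: "\<And>i. continuous_on UNIV (g i)"
    and law: "coord_law L g J = coord_law L' g J"
  shows "coord_closure g J q \<in> sets borel"
    and "emeasure L (coord_closure g J q) = emeasure L' (coord_closure g J q)"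
proof -
  let ?N = "PiM J (\<lambda>_. borel :: real measure)" and ?G = "\<lambda>x. \<lambda>i\<in>J. g i x"
  define W where "W = {v \<in> space ?N. \<forall>j::nat. \<exists>n. (\<Sum>i\<in>J. \<bar>v i - g i (q n)\<bar>) < 1 / Suc j}"
  have G: "?G \<in> borel \<rightarrow>\<^sub>M ?N"
    using cont by (rule measurable_restrict_continuous_on)
  have "W \<in> sets ?N"
    unfolding W_def by measurable
  moreover have pre: "?G -` W \<inter> space borel = coord_closure g J q"
    by (auto simp: W_def coord_closure_def coord_dist_def space_PiM)
  ultimately show "coord_closure g J q \<in> sets borel"
    using measurable_sets[OF G] by metis
  have "emeasure M (coord_closure g J q) = emeasure (coord_law M g J) W"
    if "sets M = sets borel" for M
    using emeasure_distr[of ?G M ?N W] G \<open>W \<in> sets ?N\<close> pre that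
    by (simp add: coord_law_def measurable_cong_sets[OF that refl] sets_eq_imp_space_eq[OF that])
  with law assms(1,2) show "emeasure L (coord_closure g J q) = emeasure L' (coord_closure g J q)"
    by metis
qed

context
  fixes K :: "'a::metric_space set" and g :: "'i \<Rightarrow> 'a \<Rightarrow> real" and I :: "nat \<Rightarrow> 'i set"
  assumes compact_UNIV: "compact (UNIV :: 'a set)"
    and cont: "\<And>i. continuous_on UNIV (g i)"
    and I: "incseq I" "\<And>R. finite (I R)"
    and sep: "\<And>x y. x \<in> K \<Longrightarrow> (\<And>i. i \<in> (\<Union>R. I R) \<Longrightarrow> g i x = g i y) \<Longrightarrow> x = y"
begin

lemma tendsto_emeasure_coord_closure:
  assumes M: "finite_measure M" "sets M = sets borel" "AE x in M. x \<in> K"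
    and C: "closed C" "range q \<subseteq> C" "C \<subseteq> closure (range q)"
  shows "(\<lambda>R. emeasure M (coord_closure g (I R) q)) \<longlonglongrightarrow> emeasure M C"
proof -
  let ?E = "\<lambda>R. coord_closure g (I R) q"
  have E: "?E R \<in> sets borel" for R
    using emeasure_coord_closure_eq(1)[OF M(2) M(2) cont refl] .
  have "compact C" using compact_Int_closed[OF compact_UNIV C(1)] by simp
  have "AE x in M. x \<in> C \<longleftrightarrow> x \<in> (\<Inter>R. ?E R)"
    using M(3)
  proof eventually_elim
    case (elim x)
    show ?case
    proof
      assume "x \<in> C"
      then show "x \<in> (\<Inter>R. ?E R)"
        using C(3) closure_subset_coord_closure[where g=g and q=q, OF cont] by blast
    next
      assume "x \<in> (\<Inter>R. ?E R)"
      then show "x \<in> C"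
        by (rule Inter_coord_closure_imp_mem[OF \<open>compact C\<close> C(2) I cont _ sep[OF elim]])
    qed
  qed
  moreover have "(\<Inter>R. ?E R) \<in> sets borel" using E by auto
  ultimately have "emeasure M C = emeasure M (\<Inter>R. ?E R)"
    using C(1) M(2) by (intro emeasure_eq_AE) auto
  moreover have "(\<lambda>R. emeasure M (?E R)) \<longlonglongrightarrow> emeasure M (\<Inter>R. ?E R)"
  proof (rule Lim_emeasure_decseq)
    show "range ?E \<subseteq> sets M" using E M(2) by auto
    show "decseq ?E"
      using I by (intro decseq_SucI coord_closure_antimono) (auto simp: incseq_Suc_iff)
    show "emeasure M (?E R) \<noteq> \<infinity>" for R
      using finite_measure.emeasure_finite[OF M(1)] by simp
  qed
  ultimately show ?thesis by simp
qed

lemma measure_eqI_coord_law: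
  assumes L: "finite_measure L" "sets L = sets borel" "AE x in L. x \<in> K"
    and L': "finite_measure L'" "sets L' = sets borel" "AE x in L'. x \<in> K"
    and law: "\<And>R. coord_law L g (I R) = coord_law L' g (I R)"
  shows "L = L'"
proof (rule measure_eqI_generator_eq[where E="Collect closed" and \<Omega>=UNIV and A="\<lambda>_. UNIV"])
  show "emeasure L C = emeasure L' C" if "C \<in> Collect closed" for C
  proof (cases "C = {}")
    case False
    have "compact C" using that compact_Int_closed[OF compact_UNIV, of C] by simp
    then obtain q :: "nat \<Rightarrow> 'a" where q: "range q \<subseteq> C" "C \<subseteq> closure (range q)"
      using False by (rule compact_dense_sequence)
    have "(\<lambda>R. emeasure L (coord_closure g (I R) q)) \<longlonglongrightarrow> emeasure L C"
         "(\<lambda>R. emeasure L (coord_closure g (I R) q)) \<longlonglongrightarrow> emeasure L' C"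
      using tendsto_emeasure_coord_closure[OF L _ q] tendsto_emeasure_coord_closure[OF L' _ q]
        emeasure_coord_closure_eq(2)[OF L(2) L'(2) cont law] that by simp_all
    then show ?thesis by (rule LIMSEQ_unique)
  qed simp
  show "Int_stable (Collect closed)" by (auto simp: Int_stable_def)
  show "sets L = sigma_sets UNIV (Collect closed)" "sets L' = sigma_sets UNIV (Collect closed)"
    using L(2) L'(2) by (simp_all add: borel_eq_closed sets_measure_of)
  show "emeasure L UNIV \<noteq> \<infinity>"
    using finite_measure.emeasure_finite[OF L(1)] by simp
qed auto

end

lemma AE_joining_msupp:
  assumes "cmmps \<mu> T" "cmmps \<nu> S" "L \<in> joinings \<mu> T \<nu> S"
  shows "AE p in L. fst p \<in> msupp \<mu> \<and> snd p \<in> msupp \<nu>"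
proof -
  have L: "sets L = sets borel" "distr L borel fst = \<mu>" "distr L borel snd = \<nu>"
    using assms(3) by (auto simp: joinings_def)
  have "fst \<in> L \<rightarrow>\<^sub>M borel" "snd \<in> L \<rightarrow>\<^sub>M borel"
    by (simp_all add: measurable_cong_sets[OF L(1) refl] borel_measurable_continuous_onI
        continuous_on_fst continuous_on_snd continuous_on_id)
  moreover have "AE x in \<mu>. x \<in> msupp \<mu>" "AE y in \<nu>. y \<in> msupp \<nu>"
    using assms(1,2) by (auto simp: cmmps_def intro: AE_in_msupp)
  ultimately have "AE p in L. fst p \<in> msupp \<mu>" "AE p in L. snd p \<in> msupp \<nu>"
    using L(2,3) by (auto intro: AE_distrD)
  then show ?thesis by (rule AE_conjI)
qed

text \<open>The anchored array of a single point at time 0, indexed like \<open>arr_idxs 1 1 R\<close>; its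
  \<open>DX\<close> and \<open>DY\<close> entries are \<open>d(x, x) = 0\<close>.\<close>
definition anchor_coord ::
  "(nat \<Rightarrow> 'a::metric_space) \<Rightarrow> (nat \<Rightarrow> 'b::metric_space) \<Rightarrow> arr_idx \<Rightarrow> 'a \<times> 'b \<Rightarrow> real" where
  "anchor_coord a b k p =
     (case k of AX _ _ r \<Rightarrow> dist (fst p) (a r) | AY _ _ r \<Rightarrow> dist (snd p) (b r) | _ \<Rightarrow> 0)"

lemma continuous_on_anchor_coord: "continuous_on UNIV (anchor_coord a b k)"
  unfolding anchor_coord_def by (cases k) (auto intro!: continuous_intros)

lemma arr_idxs_1_1:
  "arr_idxs 1 1 R = {DX 1 1 0 0, DY 1 1 0 0} \<union> AX 1 0 ` {1..R} \<union> AY 1 0 ` {1..R}"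
  by (auto simp: arr_idxs_def)

lemma anch_arrays_1_1:
  "anch_arrays T S a b 1 1 R z = (\<lambda>k\<in>arr_idxs 1 1 R. anchor_coord a b k (z 1))"
  unfolding anch_arrays_def anchor_coord_def by (rule ext) (auto simp: arr_idxs_def)

lemma anch_proj_1_1:
  assumes "prob_space L" "sets L = sets borel"
  shows "anch_proj T S a b 1 1 R L = coord_law L (anchor_coord a b) (arr_idxs 1 1 R)"
proof -
  let ?P = "PiM {1..1::nat} (\<lambda>_. L)" and ?N = "PiM (arr_idxs 1 1 R) (\<lambda>_. borel :: real measure)"
  let ?G = "\<lambda>p. \<lambda>k\<in>arr_idxs 1 1 R. anchor_coord a b k p"
  have "?G \<in> L \<rightarrow>\<^sub>M ?N"
    using measurable_restrict_continuous_on[OF continuous_on_anchor_coord]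
    by (simp add: measurable_cong_sets[OF assms(2) refl])
  moreover have "(\<lambda>z. z 1) \<in> ?P \<rightarrow>\<^sub>M L"
    by (rule measurable_component_singleton) simp
  ultimately have "anch_proj T S a b 1 1 R L = distr (distr ?P L (\<lambda>z. z 1)) ?N ?G"
    unfolding anch_proj_def anch_arrays_1_1 by (simp add: distr_distr comp_def)
  also have "distr ?P L (\<lambda>z. z 1) = L"
    using distr_PiM_component[of "{1..1::nat}" "\<lambda>_. L" 1] assms by simp
  finally show ?thesis unfolding coord_law_def .
qed

lemma anchor_coord_separates:
  assumes "p \<in> closure (a ` {1..}) \<times> closure (b ` {1..})"
    and eq: "\<And>k. k \<in> (\<Union>R. arr_idxs 1 1 (Suc R)) \<Longrightarrow> anchor_coord a b k p = anchor_coord a b k p'"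
  shows "p = p'"
proof -
  have "AX 1 0 r \<in> arr_idxs 1 1 (Suc r)" "AY 1 0 r \<in> arr_idxs 1 1 (Suc r)" if "r \<ge> 1" for r
    using that by (auto simp: arr_idxs_def)
  then have "dist (fst p) (a r) = dist (fst p') (a r)" "dist (snd p) (b r) = dist (snd p') (b r)"
    if "r \<ge> 1" for r
    using eq[of "AX 1 0 r"] eq[of "AY 1 0 r"] that by (auto simp: anchor_coord_def)
  then have "fst p = fst p'" "snd p = snd p'"
    using assms(1) by (auto simp: mem_Times_iff intro: closure_dist_eq_imp_eq)
  then show ?thesis by (rule prod_eqI)
qed

theorem theorem13:
  fixes \<mu> :: "'a::metric_space measure" and T :: "'a \<Rightarrow> 'a"
    and \<nu> :: "'b::metric_space measure" and S :: "'b \<Rightarrow> 'b"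
    and a :: "nat \<Rightarrow> 'a" and b :: "nat \<Rightarrow> 'b"
    and L L' :: "('a \<times> 'b) measure"
  assumes "cmmps \<mu> T" and "cmmps \<nu> S"
    and "a ` {1..} \<subseteq> msupp \<mu>" and "msupp \<mu> \<subseteq> closure (a ` {1..})"
    and "b ` {1..} \<subseteq> msupp \<nu>" and "msupp \<nu> \<subseteq> closure (b ` {1..})"
    and "L \<in> joinings \<mu> T \<nu> S" and "L' \<in> joinings \<mu> T \<nu> S"
    and "\<And>n m R. n \<ge> 1 \<Longrightarrow> m \<ge> 1 \<Longrightarrow> R \<ge> 1 \<Longrightarrow>
           anch_proj T S a b n m R L = anch_proj T S a b n m R L'"
  shows "L = L'"
proof -
  let ?K = "closure (a ` {1..}) \<times> closure (b ` {1..})"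
  have J: "finite_measure M" "sets M = sets borel" "AE p in M. p \<in> ?K"
    and law: "anch_proj T S a b 1 1 R M = coord_law M (anchor_coord a b) (arr_idxs 1 1 R)"
    if "M \<in> joinings \<mu> T \<nu> S" for M R
  proof -
    show M: "finite_measure M" "sets M = sets borel"
      using that by (auto simp: joinings_def intro: prob_space.finite_measure)
    show "AE p in M. p \<in> ?K"
      using AE_joining_msupp[OF assms(1,2) that] by (rule eventually_mono) (use assms(4,6) in auto)
    show "anch_proj T S a b 1 1 R M = coord_law M (anchor_coord a b) (arr_idxs 1 1 R)"
      using that M(2) by (intro anch_proj_1_1) (auto simp: joinings_def)
  qed
  show ?thesis
  proof (rule measure_eqI_coord_law[where K="?K" and I="\<lambda>R. arr_idxs 1 1 (Suc R)"])
    show "compact (UNIV :: ('a \<times> 'b) set)"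
      using compact_Times assms(1,2) by (fastforce simp: cmmps_def)
    show "incseq (\<lambda>R. arr_idxs 1 1 (Suc R))" "\<And>R. finite (arr_idxs 1 1 (Suc R))"
      unfolding arr_idxs_1_1 by (auto simp: incseq_def)
    show "p = p'" if "p \<in> ?K"
      and "\<And>k. k \<in> (\<Union>R. arr_idxs 1 1 (Suc R)) \<Longrightarrow> anchor_coord a b k p = anchor_coord a b k p'"
      for p p'
      using that by (rule anchor_coord_separates)
    show "coord_law L (anchor_coord a b) (arr_idxs 1 1 (Suc R))
        = coord_law L' (anchor_coord a b) (arr_idxs 1 1 (Suc R))" for R
      using assms(9)[of 1 1 "Suc R"] law[OF assms(7)] law[OF assms(8)] by simp
  qed (fact J[OF assms(7)] J[OF assms(8)] continuous_on_anchor_coord)+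
qed

end
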